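(* Let $\mathcal{T}$ be a tangle of order $k$ in a connectivity system $(E,\lambda)$, and let $X$ be a $\mathcal{T}$-strong $k$-separating set in $\lambda$. If $X_1$ and $X_2$ are fully closed $k$-separating sets that contain $X$, then there is a fully closed $k$-separating set $Y$ such that $X\subseteq Y\subseteq X_1\cap X_2$.
   Context: A connectivity system is a pair $(E,\lambda)$ with $E$ finite and $\lambda$ an integer-valued symmetric ($\lambda(X)=\lambda(E-X)$) submodular ($\lambda(X)+\lambda(Y)\ge\lambda(X\cup Y)+\lambda(X\cap Y)$) function on subsets of $E$. $X$ is $k$-separating if $\lambda(X)\le k$. A tangle of order $k$ is a collection $\mathcal T$ of subsets of $E$ with (T1) $\lambda(A)<k$ for $A\in\mathcal T$; (T2) if $\lambda(A)\le k-1$ then $A\in\mathcal T$ or $E-A\in\mathcal T$; (T3) $A\cup B\cup C\ne E$ for $A,B,C\in\mathcal T$; (T4) $E-\{e\}\notin\mathcal T$ for $e\in E$. A set is $\mathcal T$-weak if contained in a member of $\mathcal T$, and $\mathcal T$-strong otherwise. A $\mathcal T$-strong $k$-separating set $X$ is fully closed (with respect to $\mathcal T$) if $X\cup Y$ is not $k$-separating for every nonempty $\mathcal T$-weak set $Y\subseteq E-X$. *)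

theory Defs
  imports Main
begin

definition connectivity_system :: "'a set \<Rightarrow> ('a set \<Rightarrow> int) \<Rightarrow> bool" where
  "connectivity_system E lam \<longleftrightarrow>
     finite E \<and>
     (\<forall>X. X \<subseteq> E \<longrightarrow> lam X = lam (E - X)) \<and>
     (\<forall>X Y. X \<subseteq> E \<longrightarrow> Y \<subseteq> E \<longrightarrow> lam X + lam Y \<ge> lam (X \<union> Y) + lam (X \<inter> Y))"

definition k_separating :: "('a set \<Rightarrow> int) \<Rightarrow> int \<Rightarrow> 'a set \<Rightarrow> bool" where
  "k_separating lam k X \<longleftrightarrow> lam X \<le> k"

definition tangle :: "'a set \<Rightarrow> ('a set \<Rightarrow> int) \<Rightarrow> int \<Rightarrow> 'a set set \<Rightarrow> bool" where
  "tangle E lam k T \<longleftrightarrow>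
     T \<subseteq> Pow E \<and>
     (\<forall>A\<in>T. lam A < k) \<and>
     (\<forall>A. A \<subseteq> E \<longrightarrow> lam A \<le> k - 1 \<longrightarrow> A \<in> T \<or> E - A \<in> T) \<and>
     (\<forall>A\<in>T. \<forall>B\<in>T. \<forall>C\<in>T. A \<union> B \<union> C \<noteq> E) \<and>
     (\<forall>e\<in>E. E - {e} \<notin> T)"

definition T_weak :: "'a set set \<Rightarrow> 'a set \<Rightarrow> bool" where
  "T_weak T X \<longleftrightarrow> (\<exists>A\<in>T. X \<subseteq> A)"

definition T_strong :: "'a set set \<Rightarrow> 'a set \<Rightarrow> bool" where
  "T_strong T X \<longleftrightarrow> \<not> T_weak T X"

definition fully_closed :: "'a set \<Rightarrow> ('a set \<Rightarrow> int) \<Rightarrow> int \<Rightarrow> 'a set set \<Rightarrow> 'a set \<Rightarrow> bool" where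
  "fully_closed E lam k T X \<longleftrightarrow>
     X \<subseteq> E \<and> T_strong T X \<and> k_separating lam k X \<and>
     (\<forall>Y. Y \<noteq> {} \<longrightarrow> Y \<subseteq> E - X \<longrightarrow> T_weak T Y \<longrightarrow> \<not> k_separating lam k (X \<union> Y))"

end

theory Submission
  imports Defs
begin

text \<open>Among the \<open>T\<close>-strong \<open>k\<close>-separating sets between \<open>X\<close> and \<open>X\<^sub>1 \<inter> X\<^sub>2\<close> take a
maximal one \<open>Y\<close>. If \<open>Y \<union> Z\<close> were \<open>k\<close>-separating for a nonempty \<open>T\<close>-weak \<open>Z\<close> disjoint
from \<open>Y\<close>, submodularity applied to \<open>X\<^sub>i\<close> and \<open>Y \<union> Z\<close> would, unless \<open>Z \<subseteq> X\<^sub>i\<close>, make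
\<open>X\<^sub>i \<inter> (Y \<union> Z)\<close> a \<open>T\<close>-strong set of order less than \<open>k\<close> inside \<open>X\<^sub>i\<close>; its complement is
then in \<open>T\<close>, so \<open>X\<^sub>i\<close> could be closed up to all of \<open>E\<close>, contradicting full closure.
Hence \<open>Z \<subseteq> X\<^sub>1 \<inter> X\<^sub>2\<close>, contradicting the maximality of \<open>Y\<close>.\<close>

lemma connectivity_system_symmetric:
  "connectivity_system E lam \<Longrightarrow> X \<subseteq> E \<Longrightarrow> lam (E - X) = lam X"
  unfolding connectivity_system_def by (elim conjE) (rule sym, blast)

lemma connectivity_system_submodular:
  "connectivity_system E lam \<Longrightarrow> X \<subseteq> E \<Longrightarrow> Y \<subseteq> E \<Longrightarrow>
    lam (X \<union> Y) + lam (X \<inter> Y) \<le> lam X + lam Y"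
  unfolding connectivity_system_def by blast

lemma connectivity_system_whole_le:
  assumes cs: "connectivity_system E lam" and YE: "Y \<subseteq> E"
  shows "lam E \<le> lam Y"
proof -
  have "lam (Y \<union> (E - Y)) + lam (Y \<inter> (E - Y)) \<le> lam Y + lam (E - Y)"
    using connectivity_system_submodular[OF cs YE Diff_subset] .
  moreover have "Y \<union> (E - Y) = E" and "Y \<inter> (E - Y) = {}" using YE by blast+
  moreover have "lam {} = lam E"
    using connectivity_system_symmetric[OF cs, of E] by simp
  ultimately show ?thesis
    using connectivity_system_symmetric[OF cs YE] by simp
qed

lemma fully_closedD:
  assumes "fully_closed E lam k T X"
  shows "X \<subseteq> E" and "T_strong T X" and "lam X \<le> k"
  using assms unfolding fully_closed_def k_separating_def by simp_all

lemma fully_closed_extend: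
  assumes "fully_closed E lam k T X" and "Y \<noteq> {}" and "Y \<subseteq> E - X" and "T_weak T Y"
  shows "k < lam (X \<union> Y)"
  using assms unfolding fully_closed_def k_separating_def by auto

lemma T_strong_mono: "T_strong T Y \<Longrightarrow> Y \<subseteq> W \<Longrightarrow> T_strong T W"
  unfolding T_strong_def T_weak_def by blast

lemma T_weak_mono: "T_weak T W \<Longrightarrow> Y \<subseteq> W \<Longrightarrow> T_weak T Y"
  unfolding T_weak_def by blast

lemma tangle_compl_mem_if_strong:
  assumes "tangle E lam k T" and "Y \<subseteq> E" and "T_strong T Y" and "lam Y < k"
  shows "E - Y \<in> T"
proof -
  have "Y \<in> T \<or> E - Y \<in> T" using assms(1,2,4) unfolding tangle_def by simp
  moreover have "Y \<notin> T" using assms(3) unfolding T_strong_def T_weak_def by blast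
  ultimately show ?thesis by blast
qed

lemma fully_closed_strong_subset_order:
  assumes cs: "connectivity_system E lam" and tg: "tangle E lam k T"
    and fc: "fully_closed E lam k T X" and proper: "X \<noteq> E"
    and YX: "Y \<subseteq> X" and st: "T_strong T Y"
  shows "k \<le> lam Y"
proof (rule ccontr)
  assume "\<not> k \<le> lam Y"
  have XE: "X \<subseteq> E" using fully_closedD(1)[OF fc] .
  with YX have YE: "Y \<subseteq> E" by (rule order_trans)
  have "E - Y \<in> T"
    using tangle_compl_mem_if_strong[OF tg YE st] \<open>\<not> k \<le> lam Y\<close> by linarith
  then have "T_weak T (E - X)" unfolding T_weak_def using YX by blast
  moreover have "E - X \<noteq> {}" using proper XE by blast
  ultimately have "k < lam (X \<union> (E - X))"
    using fully_closed_extend[OF fc _ order_refl] by simp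
  moreover have "X \<union> (E - X) = E" using XE by blast
  moreover have "lam E \<le> lam Y" using connectivity_system_whole_le[OF cs YE] .
  ultimately show False using \<open>\<not> k \<le> lam Y\<close> by simp
qed

lemma fully_closed_absorbs_weak:
  assumes cs: "connectivity_system E lam" and tg: "tangle E lam k T"
    and fc: "fully_closed E lam k T X" and YX: "Y \<subseteq> X" and st: "T_strong T Y"
    and wk: "T_weak T Z" and YZE: "Y \<union> Z \<subseteq> E" and sep: "lam (Y \<union> Z) \<le> k"
  shows "Z \<subseteq> X"
proof (rule ccontr)
  assume "\<not> Z \<subseteq> X"
  have XE: "X \<subseteq> E" and lX: "lam X \<le> k" using fully_closedD[OF fc] by simp_all
  have ne: "Z - X \<noteq> {}" and sub: "Z - X \<subseteq> E - X" using \<open>\<not> Z \<subseteq> X\<close> YZE by blast+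
  have "X \<union> (Z - X) = X \<union> (Y \<union> Z)" using YX by blast
  then have big: "k < lam (X \<union> (Y \<union> Z))"
    using fully_closed_extend[OF fc ne sub T_weak_mono[OF wk Diff_subset]] by simp
  have "T_strong T (X \<inter> (Y \<union> Z))" by (rule T_strong_mono[OF st]) (use YX in blast)
  moreover have "X \<noteq> E" using \<open>\<not> Z \<subseteq> X\<close> YZE by blast
  ultimately have "k \<le> lam (X \<inter> (Y \<union> Z))"
    using fully_closed_strong_subset_order[OF cs tg fc _ Int_lower1] by simp
  moreover have "lam (X \<union> (Y \<union> Z)) + lam (X \<inter> (Y \<union> Z)) \<le> lam X + lam (Y \<union> Z)"
    using connectivity_system_submodular[OF cs XE YZE] .
  ultimately show False using big lX sep by linarith
qed

lemma fully_closed_if_maximal_in_Int: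
  assumes cs: "connectivity_system E lam" and tg: "tangle E lam k T"
    and fc1: "fully_closed E lam k T X1" and fc2: "fully_closed E lam k T X2"
    and Y: "Y \<subseteq> X1 \<inter> X2" and st: "T_strong T Y" and sep: "k_separating lam k Y"
    and maximal: "\<And>W. Y \<subset> W \<Longrightarrow> W \<subseteq> X1 \<inter> X2 \<Longrightarrow> T_strong T W \<Longrightarrow> \<not> k_separating lam k W"
  shows "fully_closed E lam k T Y"
  unfolding fully_closed_def
proof (intro conjI allI impI)
  have X1E: "X1 \<subseteq> E" using fully_closedD(1)[OF fc1] .
  then show "Y \<subseteq> E" using Y by blast
  show "T_strong T Y" and "k_separating lam k Y" by fact+
  fix Z assume "Z \<noteq> {}" "Z \<subseteq> E - Y" "T_weak T Z"
  show "\<not> k_separating lam k (Y \<union> Z)"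
  proof
    assume sepYZ: "k_separating lam k (Y \<union> Z)"
    then have order: "lam (Y \<union> Z) \<le> k" unfolding k_separating_def .
    have YZE: "Y \<union> Z \<subseteq> E" using \<open>Z \<subseteq> E - Y\<close> Y X1E by blast
    have "Z \<subseteq> X1"
      using fully_closed_absorbs_weak[OF cs tg fc1 _ st \<open>T_weak T Z\<close> YZE order] Y by blast
    moreover have "Z \<subseteq> X2"
      using fully_closed_absorbs_weak[OF cs tg fc2 _ st \<open>T_weak T Z\<close> YZE order] Y by blast
    ultimately have "Y \<union> Z \<subseteq> X1 \<inter> X2" using Y by blast
    moreover have "Y \<subset> Y \<union> Z" using \<open>Z \<noteq> {}\<close> \<open>Z \<subseteq> E - Y\<close> by blast
    moreover have "T_strong T (Y \<union> Z)" using T_strong_mono[OF st Un_upper1] .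
    ultimately show False using maximal sepYZ by simp
  qed
qed

theorem lemma3p1:
  fixes E :: "'a set" and lam :: "'a set \<Rightarrow> int" and k :: int
    and T :: "'a set set" and X X1 X2 :: "'a set"
  assumes "connectivity_system E lam"
    and "tangle E lam k T"
    and "X \<subseteq> E" and "T_strong T X" and "k_separating lam k X"
    and "fully_closed E lam k T X1" and "fully_closed E lam k T X2"
    and "X \<subseteq> X1" and "X \<subseteq> X2"
  shows "\<exists>Y. fully_closed E lam k T Y \<and> X \<subseteq> Y \<and> Y \<subseteq> X1 \<inter> X2"
proof -
  define F where "F = {Y. X \<subseteq> Y \<and> Y \<subseteq> X1 \<inter> X2 \<and> T_strong T Y \<and> k_separating lam k Y}"
  have "F \<subseteq> Pow E" using fully_closedD(1)[OF assms(6)] unfolding F_def by blast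
  then have "finite F"
    using assms(1) unfolding connectivity_system_def by (meson finite_Pow_iff finite_subset)
  moreover have "X \<in> F" unfolding F_def using assms(4,5,8,9) by simp
  ultimately obtain Y where "Y \<in> F" and maximal: "\<forall>W\<in>F. Y \<subseteq> W \<longrightarrow> Y = W"
    by (meson finite_has_maximal2)
  then have XY: "X \<subseteq> Y" and Y: "Y \<subseteq> X1 \<inter> X2" "T_strong T Y" "k_separating lam k Y"
    unfolding F_def by simp_all
  have "\<not> k_separating lam k W"
    if "Y \<subset> W" and "W \<subseteq> X1 \<inter> X2" and "T_strong T W" for W
    using maximal that XY unfolding F_def by blast
  then have "fully_closed E lam k T Y"
    using fully_closed_if_maximal_in_Int[OF assms(1,2,6,7) Y] by blast
  then show ?thesis using XY Y(1) by blast
qed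

end
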